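(* Fix integers $\ell < \mu < u$ and let $\mu' = \mu + 1$. Let $p \in (0,1)$ be any dyadic rational. Let $Z \sim \operatorname{DSG}_{\mu,p}$ and $Z' \sim \operatorname{DSG}_{\mu',p}$ be samples from the (unclamped) Dyadic Symmetric Geometric distribution centered at $\mu$ and $\mu'$, respectively. Let $Y = \max\{\ell, \min\{Z, u\}\}$ and $Y' = \max\{\ell, \min\{Z', u\}\}$. Then for every $y \in \mathbb{Z} \cap [\ell,u]$, \[ \frac{\Pr[Y = y]}{\Pr[Y' = y]} \le \frac{1}{1 - p} \quad\text{and}\quad \frac{\Pr[Y' = y]}{\Pr[Y = y]} \le \frac{1}{1 - p}, \] so the mechanism (outputting $Y$ when the center is $\mu$) is $\varepsilon$-differentially private with $\varepsilon = \ln\!\left(\tfrac{1}{1-p}\right)$.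
   Context: The Dyadic Symmetric Geometric distribution $\operatorname{DSG}_{c,p}$ with center $c\in\mathbb{Z}$ and dyadic parameter $p\in(0,1)$ is defined as follows: flip one unbiased coin to obtain a sign $S\in\{-1,+1\}$ and draw $G$ from a geometric distribution with parameter $p$ taking values in $\{0,1,2,\dots\}$; set $Z = c - G$ if $S=-1$ and $Z = c + 1 + G$ if $S=+1$. The censored version clamps $Z$ to $[\ell,u]$ via $\max\{\ell,\min\{Z,u\}\}$. Adjacent inputs are modeled by centers differing by one ($\mu$ vs. $\mu+1$). *)

theory Defs
  imports "HOL-Probability.Probability"
begin

definition dyadic :: "real \<Rightarrow> bool" where
  "dyadic x \<longleftrightarrow> (\<exists>(a::int) (k::nat). x = real_of_int a / 2 ^ k)"

text \<open>Dyadic Symmetric Geometric distribution DSG_{c,p}: a fair sign S and an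
independent geometric G on {0,1,...} with P(G = n) = (1-p)^n p;
Z = c - G if S = -1 and Z = c + 1 + G if S = +1.\<close>
definition dsg_pmf :: "int \<Rightarrow> real \<Rightarrow> int pmf" where
  "dsg_pmf c p =
     bind_pmf (bernoulli_pmf (1/2)) (\<lambda>s.
     map_pmf (\<lambda>g. if s then c + 1 + int g else c - int g) (geometric_pmf p))"

definition clamp :: "int \<Rightarrow> int \<Rightarrow> int \<Rightarrow> int" where
  "clamp l u z = max l (min z u)"

definition censored_dsg_pmf :: "int \<Rightarrow> int \<Rightarrow> int \<Rightarrow> real \<Rightarrow> int pmf" where
  "censored_dsg_pmf l u c p = map_pmf (clamp l u) (dsg_pmf c p)"

end

theory Submission
  imports Defs
begin

text \<open>The unclamped mass of \<open>DSG\<^sub>c\<^sub>,\<^sub>p\<close> at \<open>z\<close> is \<open>p/2 \<cdot> (1-p)^e\<close>, where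
\<open>e = |z - (c + 1/2)| - 1/2\<close> changes by at most one when the centre \<open>c\<close> moves by one. Hence
each of the two mass functions is bounded pointwise by \<open>1/(1-p)\<close> times the other, and clamping
is post-processing: a pointwise bound \<open>pmf M \<le> k \<cdot> pmf N\<close> survives every \<open>map_pmf\<close>.\<close>

lemma pmf_map_le_scaled:
  assumes "\<And>z. pmf M z \<le> k * pmf N z"
  shows "pmf (map_pmf f M) y \<le> k * pmf (map_pmf f N) y"
proof -
  have "pmf (map_pmf f M) y = infsetsum (pmf M) (f -` {y})"
    by (simp add: pmf_map measure_pmf_conv_infsetsum)
  also have "\<dots> \<le> infsetsum (\<lambda>z. k * pmf N z) (f -` {y})"
    by (rule infsetsum_mono) (use assms in auto)
  also have "\<dots> = k * infsetsum (pmf N) (f -` {y})"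
    by (rule infsetsum_cmult_right) auto
  also have "\<dots> = k * pmf (map_pmf f N) y"
    by (simp add: pmf_map measure_pmf_conv_infsetsum)
  finally show ?thesis .
qed

lemma divide_le_of_le_mult:
  fixes a b k :: real
  assumes "0 \<le> a" "0 \<le> b" "0 \<le> k" "a \<le> k * b"
  shows "a / b \<le> k"
  using assms by (cases "b = 0") (auto simp: divide_le_eq mult.commute)

lemma power_le_power_divide:
  fixes q :: real
  assumes "0 < q" "q \<le> 1" "n \<le> Suc m"
  shows "q ^ m \<le> q ^ n / q"
proof -
  have "q * q ^ m \<le> q ^ n"
    using power_decreasing[of n "Suc m" q] assms by simp
  then show ?thesis
    using assms(1) by (simp add: le_divide_eq mult.commute)
qed

definition dsg_exponent :: "int \<Rightarrow> int \<Rightarrow> nat" where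
  "dsg_exponent c z = nat (if z \<le> c then c - z else z - c - 1)"

lemma dsg_exponent_shift_le:
  "dsg_exponent (c + 1) z \<le> Suc (dsg_exponent c z)"
  "dsg_exponent c z \<le> Suc (dsg_exponent (c + 1) z)"
  by (auto simp: dsg_exponent_def)

lemma pmf_dsg:
  assumes "0 < p" "p < 1"
  shows "pmf (dsg_pmf c p) z = p / 2 * (1 - p) ^ dsg_exponent c z"
proof -
  let ?up = "\<lambda>g::nat. c + 1 + int g" and ?down = "\<lambda>g::nat. c - int g"
  have inj: "inj ?up" "inj ?down"
    by (auto simp: inj_def)
  have branches: "pmf (dsg_pmf c p) z =
      (pmf (map_pmf ?up (geometric_pmf p)) z + pmf (map_pmf ?down (geometric_pmf p)) z) / 2"
    unfolding dsg_pmf_def pmf_bind by simp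
  show ?thesis
  proof (cases "z \<le> c")
    case True
    have "pmf (map_pmf ?up (geometric_pmf p)) z = 0"
      using True by (intro pmf_map_outside) auto
    moreover have "pmf (map_pmf ?down (geometric_pmf p)) z = pmf (geometric_pmf p) (nat (c - z))"
      using pmf_map_inj'[OF inj(2), of "geometric_pmf p" "nat (c - z)"] True by simp
    ultimately show ?thesis
      using branches True assms by (simp add: dsg_exponent_def)
  next
    case False
    have "pmf (map_pmf ?down (geometric_pmf p)) z = 0"
      using False by (intro pmf_map_outside) auto
    moreover have "pmf (map_pmf ?up (geometric_pmf p)) z = pmf (geometric_pmf p) (nat (z - c - 1))"
      using pmf_map_inj'[OF inj(1), of "geometric_pmf p" "nat (z - c - 1)"] False by simp
    ultimately show ?thesis
      using branches False assms by (simp add: dsg_exponent_def)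
  qed
qed

lemma pmf_dsg_le_shift:
  assumes "0 < p" "p < 1" "dsg_exponent c' z \<le> Suc (dsg_exponent c z)"
  shows "pmf (dsg_pmf c p) z \<le> 1 / (1 - p) * pmf (dsg_pmf c' p) z"
proof -
  have power_le: "(1 - p) ^ dsg_exponent c z \<le> (1 - p) ^ dsg_exponent c' z / (1 - p)"
    using assms by (intro power_le_power_divide) auto
  have "pmf (dsg_pmf c p) z = p / 2 * (1 - p) ^ dsg_exponent c z"
    using assms(1,2) by (rule pmf_dsg)
  also have "\<dots> \<le> p / 2 * ((1 - p) ^ dsg_exponent c' z / (1 - p))"
    using power_le assms(1) by (intro mult_left_mono) auto
  also have "\<dots> = 1 / (1 - p) * pmf (dsg_pmf c' p) z"
    using assms(1,2) by (simp add: pmf_dsg)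
  finally show ?thesis .
qed

theorem mainTheorem14:
  fixes l \<mu> u :: int and p :: real
  assumes "l < \<mu>" and "\<mu> < u"
    and "0 < p" and "p < 1" and "dyadic p"
  shows "\<forall>y\<in>{l..u}.
           pmf (censored_dsg_pmf l u \<mu> p) y / pmf (censored_dsg_pmf l u (\<mu> + 1) p) y \<le> 1 / (1 - p)
         \<and> pmf (censored_dsg_pmf l u (\<mu> + 1) p) y / pmf (censored_dsg_pmf l u \<mu> p) y \<le> 1 / (1 - p)"
proof (intro ballI conjI)
  fix y
  have k: "0 \<le> 1 / (1 - p)"
    using assms by simp
  note shift = pmf_dsg_le_shift[OF assms(3,4) dsg_exponent_shift_le(1)]
               pmf_dsg_le_shift[OF assms(3,4) dsg_exponent_shift_le(2)]
  show "pmf (censored_dsg_pmf l u \<mu> p) y / pmf (censored_dsg_pmf l u (\<mu> + 1) p) y \<le> 1 / (1 - p)"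
    unfolding censored_dsg_pmf_def
    by (intro divide_le_of_le_mult pmf_nonneg k pmf_map_le_scaled shift)
  show "pmf (censored_dsg_pmf l u (\<mu> + 1) p) y / pmf (censored_dsg_pmf l u \<mu> p) y \<le> 1 / (1 - p)"
    unfolding censored_dsg_pmf_def
    by (intro divide_le_of_le_mult pmf_nonneg k pmf_map_le_scaled shift)
qed

end
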